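(* Let $a,b,c,d\in\mathbb{R}^2$ be points such that the segments $ab$ and $cd$ cross at a point $x$. Suppose that $|ab|\ge 2$, $|cd|\ge 2$, $|ax|\le|xb|$, $|cx|\le |xd|$, and $\angle axc\le 1^\circ$. Then $\max\{|ab|,|cd|\}\ge \max\{|ac|,|bd|\}+0.5$.
   Context: $|uv|$ denotes the Euclidean distance between points $u,v$. *)

theory Defs
  imports "HOL-Analysis.Analysis"
begin

definition vangle :: "'a::real_inner \<Rightarrow> 'a \<Rightarrow> real" where
  "vangle u v = arccos ((u \<bullet> v) / (norm u * norm v))"

definition angle3 :: "'a::real_inner \<Rightarrow> 'a \<Rightarrow> 'a \<Rightarrow> real" where
  "angle3 a x c = vangle (a - x) (c - x)"

definition segments_cross_at :: "'a::euclidean_space \<Rightarrow> 'a \<Rightarrow> 'a \<Rightarrow> 'a \<Rightarrow> 'a \<Rightarrow> bool" where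
  "segments_cross_at a b c d x \<longleftrightarrow>
     x \<in> open_segment a b \<and> x \<in> open_segment c d \<and>
     closed_segment a b \<inter> closed_segment c d = {x}"

end

theory Submission
  imports Defs
begin

text \<open>Since the angle at \<open>x\<close> is at most one degree, its cosine is at least \<open>9/10\<close>, and the law of
  cosines in the triangles \<open>a x c\<close> and \<open>b x d\<close> (whose angles at \<open>x\<close> agree, being vertical
  angles) bounds \<open>|ac|\<close> and \<open>|bd|\<close> by the longer of their two sides at \<open>x\<close>.
  The sides \<open>|ax|, |cx|\<close> are at most half of \<open>M = max |ab| |cd|\<close>, so \<open>|ac| \<le> M/2 \<le> M - 1/2\<close>.
  The sides \<open>|xb|, |xd|\<close> are at most \<open>M\<close> but at least \<open>1\<close>, and for sides \<open>q \<ge> s \<ge> 1\<close> enclosing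
  an angle of cosine at least \<open>9/10\<close> the third side is at most \<open>q - 1/2\<close>.\<close>

lemma abs_inner_divide_norms_le_1: "\<bar>(u \<bullet> v) / (norm u * norm v)\<bar> \<le> 1"
  using Cauchy_Schwarz_ineq2[of u v] by (cases "norm u * norm v = 0") (auto simp: abs_divide)

lemma cos_vangle: "cos (vangle u v) = (u \<bullet> v) / (norm u * norm v)"
  unfolding vangle_def using abs_inner_divide_norms_le_1 by (rule cos_arccos_abs)

lemma vangle_nonneg: "0 \<le> vangle u v"
  using abs_inner_divide_norms_le_1[of u v] unfolding vangle_def abs_le_iff
  by (intro arccos_lbound) auto

lemma vangle_scaleR:
  assumes "\<alpha> * \<beta> > 0"
  shows "vangle (\<alpha> *\<^sub>R u) (\<beta> *\<^sub>R v) = vangle u v"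
proof -
  have "norm (\<alpha> *\<^sub>R u) * norm (\<beta> *\<^sub>R v) = (\<bar>\<alpha>\<bar> * \<bar>\<beta>\<bar>) * (norm u * norm v)"
    by (simp add: mult_ac)
  also have "\<bar>\<alpha>\<bar> * \<bar>\<beta>\<bar> = \<alpha> * \<beta>"
    using assms by (simp add: abs_mult[symmetric])
  finally have norms: "norm (\<alpha> *\<^sub>R u) * norm (\<beta> *\<^sub>R v) = (\<alpha> * \<beta>) * (norm u * norm v)" .
  have inner: "(\<alpha> *\<^sub>R u) \<bullet> (\<beta> *\<^sub>R v) = (\<alpha> * \<beta>) * (u \<bullet> v)"
    by simp
  show ?thesis
    unfolding vangle_def inner norms using assms by (auto simp: zero_less_mult_iff)
qed

lemma law_of_cosines:
  "dist a c ^ 2 = dist a x ^ 2 + dist c x ^ 2 - 2 * dist a x * dist c x * cos (angle3 a x c)"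
proof -
  have "dist a c ^ 2 = norm ((a - x) - (c - x)) ^ 2"
    by (simp add: dist_norm)
  also have "\<dots> = norm (a - x) ^ 2 + norm (c - x) ^ 2 - 2 * ((a - x) \<bullet> (c - x))"
    by (simp add: power2_norm_eq_inner inner_diff_left inner_diff_right inner_commute)
  also have "(a - x) \<bullet> (c - x) = norm (a - x) * norm (c - x) * cos (angle3 a x c)"
    by (cases "a = x \<or> c = x") (auto simp: angle3_def cos_vangle)
  finally show ?thesis
    by (simp add: dist_norm)
qed

lemma angle3_vertical:
  assumes "x \<in> open_segment a b" and "x \<in> open_segment c d"
  shows "angle3 b x d = angle3 a x c"
proof -
  obtain t where t: "0 < t" "t < 1" "x = (1 - t) *\<^sub>R a + t *\<^sub>R b"
    using assms(1) unfolding in_segment by auto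
  obtain s where s: "0 < s" "s < 1" "x = (1 - s) *\<^sub>R c + s *\<^sub>R d"
    using assms(2) unfolding in_segment by auto
  have "a - x = t *\<^sub>R (a - b)" "b - x = (t - 1) *\<^sub>R (a - b)"
    using t by (simp_all add: algebra_simps)
  moreover have "c - x = s *\<^sub>R (c - d)" "d - x = (s - 1) *\<^sub>R (c - d)"
    using s by (simp_all add: algebra_simps)
  moreover have "(t - 1) * (s - 1) > 0"
    using t s by (simp add: mult_neg_neg)
  ultimately show ?thesis
    using t s unfolding angle3_def by (simp add: vangle_scaleR)
qed

lemma cos_one_degree_ge: "cos (pi / 180) \<ge> 9 / 10"
proof -
  have "\<bar>sin (pi / 360)\<bar> \<le> 1 / 10"
    using abs_sin_x_le_abs_x[of "pi / 360"] pi_less_4 by simp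
  then have "sin (pi / 360) ^ 2 \<le> (1 / 10) ^ 2"
    by (metis abs_ge_zero power2_abs power_mono)
  then show ?thesis
    using cos_double_sin[of "pi / 360"] by (simp add: power2_eq_square)
qed

lemma cosine_rule_short_sides:
  fixes p r k :: real
  assumes "0 \<le> p" "0 \<le> r" "1 / 2 \<le> k"
  shows "p ^ 2 + r ^ 2 - 2 * p * r * k \<le> (max p r) ^ 2"
proof -
  have "min p r ^ 2 \<le> p * r"
    using assms by (auto simp: min_def power2_eq_square intro: mult_right_mono mult_left_mono)
  also have "p * r \<le> 2 * p * r * k"
    using assms mult_right_mono[of 1 "2 * k" "p * r"] by (simp add: mult_ac)
  finally show ?thesis
    by (auto simp: min_def max_def)
qed

lemma cosine_rule_long_sides_ordered:
  fixes q s :: real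
  assumes "1 \<le> s" "s \<le> q"
  shows "q ^ 2 + s ^ 2 - 2 * q * s * (9 / 10) \<le> (q - 1 / 2) ^ 2"
proof -
  have "(q - s) * (9 / 5 * s - 1) \<ge> 0" and "(s - 1) * (4 / 5 * s - 1 / 5) \<ge> 0"
    using assms by simp_all
  moreover have "(q - 1 / 2) ^ 2 - (q ^ 2 + s ^ 2 - 2 * q * s * (9 / 10))
      = (q - s) * (9 / 5 * s - 1) + (s - 1) * (4 / 5 * s - 1 / 5) + 1 / 20"
    by (simp add: power2_eq_square field_simps)
  ultimately show ?thesis
    by linarith
qed

lemma cosine_rule_long_sides:
  fixes q s k :: real
  assumes "1 \<le> q" "1 \<le> s" "9 / 10 \<le> k"
  shows "q ^ 2 + s ^ 2 - 2 * q * s * k \<le> (max q s - 1 / 2) ^ 2"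
proof -
  have "2 * q * s * (9 / 10) \<le> 2 * q * s * k"
    using assms by (intro mult_left_mono) auto
  moreover have "q ^ 2 + s ^ 2 - 2 * q * s * (9 / 10) \<le> (max q s - 1 / 2) ^ 2"
    using assms cosine_rule_long_sides_ordered[of s q] cosine_rule_long_sides_ordered[of q s]
    by (cases "s \<le> q") (auto simp: max_def algebra_simps)
  ultimately show ?thesis
    by linarith
qed

theorem lemma1:
  fixes a b c d x :: "real^2"
  assumes "segments_cross_at a b c d x"
    and "dist a b \<ge> 2" and "dist c d \<ge> 2"
    and "dist a x \<le> dist x b" and "dist c x \<le> dist x d"
    and "angle3 a x c \<le> pi / 180"
  shows "max (dist a b) (dist c d) \<ge> max (dist a c) (dist b d) + 1/2"
proof -
  define M where "M = max (dist a b) (dist c d)"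
  have x_ab: "x \<in> open_segment a b" and x_cd: "x \<in> open_segment c d"
    using assms(1) by (simp_all add: segments_cross_at_def)
  have "dist a b = dist a x + dist x b" "dist c d = dist c x + dist x d"
    using open_closed_segment[OF x_ab] open_closed_segment[OF x_cd]
    by (simp_all add: between[symmetric] between_mem_segment)
  then have short: "dist a x \<le> M / 2" "dist c x \<le> M / 2"
    and long: "1 \<le> dist b x" "dist b x \<le> M" "1 \<le> dist d x" "dist d x \<le> M"
    using assms(2-5) by (auto simp: M_def dist_commute le_max_iff_disj)
  have "cos (pi / 180) \<le> cos (angle3 a x c)"
    using assms(6) by (intro cos_monotone_0_pi_le) (auto simp: angle3_def vangle_nonneg)
  then have cos_ge: "9 / 10 \<le> cos (angle3 a x c)"
    using cos_one_degree_ge by linarith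
  have "dist a c ^ 2 \<le> (max (dist a x) (dist c x)) ^ 2"
    unfolding law_of_cosines[of a c x] using cos_ge by (intro cosine_rule_short_sides) auto
  then have "dist a c \<le> max (dist a x) (dist c x)"
    by (rule power2_le_imp_le) (simp add: le_max_iff_disj)
  moreover have "dist b d ^ 2 \<le> (max (dist b x) (dist d x) - 1 / 2) ^ 2"
    unfolding law_of_cosines[of b d x] angle3_vertical[OF x_ab x_cd]
    using cos_ge long by (intro cosine_rule_long_sides) auto
  then have "dist b d \<le> max (dist b x) (dist d x) - 1 / 2"
    by (rule power2_le_imp_le) (use long in auto)
  ultimately show ?thesis
    using short long assms(2) unfolding M_def by auto
qed

end
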